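(* Let $N=(V,A)$ be a phylogenetic network on $X$. Then the following are equivalent: (i) $N$ is tree-based. (ii) $N$ has an antichain $S\subseteq V$ and a partition of $V$ into $|S|$ chains, each of which forms a directed path in $N$ ending at a leaf in $X$. (iii) For every $U\subseteq V$, there exists a set of vertex-disjoint directed paths in $N$, each ending at a leaf in $X$, such that each element of $U$ lies on exactly one of these paths. (iv) The vertex set $V$ can be partitioned into a set of vertex-disjoint directed paths of $N$, each of which ends at a leaf in $X$. (v) The bipartite graph $\mathcal{G}_N$ has a matching of size $|V|-|X|$.
   Context: $X$ is a nonempty finite set. A phylogenetic network on $X$ is a rooted acyclic digraph with no parallel arcs such that: the unique root has out-degree at least one; $X$ is exactly the set of vertices of out-degree zero (leaves), each of in-degree one; every other vertex either has in-degree one and out-degree at least two (a tree vertex) or in-degree at least two and out-degree one (a reticulation). If $|X|=1$, the network may also consist of the single vertex in $X$. A phylogenetic $X$-tree is a phylogenetic network on $X$ with no reticulations. Subdividing an arc $(u,v)$ replaces it by arcs $(u,w),(w,v)$ with $w$ new; a subdivision is the result of a sequence of arc subdivisions. A phylogenetic network $N$ on $X$ is tree-based if it can be obtained from some phylogenetic $X$-tree $T$ (a base tree) by first taking a subdivision of $T$ (the new vertices are attachment points) and then adding new arcs $(u,v)$ (linking arcs) where either $u$ and $v$ are both attachment points, or $u$ is a non-leaf vertex of $T$ and $v$ is an attachment point; equivalently, $N$ has a rooted spanning tree with the same root as $N$ all of whose leaves lie in $X$. An antichain is a set of vertices no two of which are joined by a directed path. For a digraph $D=(V,A)$, $\mathcal{G}_D$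 is the bipartite graph with vertex bipartition $\{V_1,V_2\}$, where $V_1$ and $V_2$ are two disjoint copies of $V$, having an edge between the copy of $u$ in $V_1$ and the copy of $v$ in $V_2$ for each arc $(u,v)\in A$. *)

theory Defs
  imports Main
begin

text \<open>Digraphs are given by a vertex set V and an arc set A (pairs; so no parallel arcs).\<close>

definition indeg :: "('a \<times> 'a) set \<Rightarrow> 'a \<Rightarrow> nat" where
  "indeg A v = card {u. (u, v) \<in> A}"

definition outdeg :: "('a \<times> 'a) set \<Rightarrow> 'a \<Rightarrow> nat" where
  "outdeg A v = card {w. (v, w) \<in> A}"

definition phylo_network :: "'a set \<Rightarrow> ('a \<times> 'a) set \<Rightarrow> 'a set \<Rightarrow> bool" where
  "phylo_network V A X \<longleftrightarrow>
     finite V \<and> A \<subseteq> V \<times> V \<and> X \<noteq> {} \<and> X \<subseteq> V \<and> acyclic A \<and>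
     ((V = X \<and> card X = 1 \<and> A = {}) \<or>
      (\<exists>r\<in>V. indeg A r = 0 \<and> outdeg A r \<ge> 1 \<and> (\<forall>v\<in>V - {r}. indeg A v \<ge> 1) \<and>
         X = {v\<in>V. outdeg A v = 0} \<and> (\<forall>x\<in>X. indeg A x = 1) \<and>
         (\<forall>v\<in>V - X - {r}. (indeg A v = 1 \<and> outdeg A v \<ge> 2) \<or> (indeg A v \<ge> 2 \<and> outdeg A v = 1))))"

definition net_root :: "'a set \<Rightarrow> ('a \<times> 'a) set \<Rightarrow> 'a" where
  "net_root V A = (THE r. r \<in> V \<and> indeg A r = 0)"

text \<open>Tree-based: N has a rooted spanning tree with the same root as N all of whose
  leaves lie in X.\<close>
definition tree_based :: "'a set \<Rightarrow> ('a \<times> 'a) set \<Rightarrow> 'a set \<Rightarrow> bool" where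
  "tree_based V A X \<longleftrightarrow>
     (\<exists>T \<subseteq> A. indeg T (net_root V A) = 0 \<and>
        (\<forall>v\<in>V - {net_root V A}. indeg T v = 1) \<and>
        (\<forall>v\<in>V. (net_root V A, v) \<in> T\<^sup>*) \<and>
        (\<forall>v\<in>V. outdeg T v = 0 \<longrightarrow> v \<in> X))"

definition antichain :: "('a \<times> 'a) set \<Rightarrow> 'a set \<Rightarrow> bool" where
  "antichain A S \<longleftrightarrow> (\<forall>u\<in>S. \<forall>v\<in>S. u \<noteq> v \<longrightarrow> (u, v) \<notin> A\<^sup>+)"

definition dipath :: "'a set \<Rightarrow> ('a \<times> 'a) set \<Rightarrow> 'a list \<Rightarrow> bool" where
  "dipath V A ps \<longleftrightarrow> ps \<noteq> [] \<and> distinct ps \<and> set ps \<subseteq> V \<and>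
     (\<forall>i. Suc i < length ps \<longrightarrow> (ps ! i, ps ! Suc i) \<in> A)"

definition leaf_path :: "'a set \<Rightarrow> ('a \<times> 'a) set \<Rightarrow> 'a set \<Rightarrow> 'a list \<Rightarrow> bool" where
  "leaf_path V A X ps \<longleftrightarrow> dipath V A ps \<and> last ps \<in> X"

definition vertex_disjoint :: "'a list set \<Rightarrow> bool" where
  "vertex_disjoint Ps \<longleftrightarrow> (\<forall>p\<in>Ps. \<forall>q\<in>Ps. p \<noteq> q \<longrightarrow> set p \<inter> set q = {})"

text \<open>The bipartite graph G_N: vertex classes Inl ` V and Inr ` V (two disjoint copies),
  with an edge {Inl u, Inr v} for each arc (u,v).\<close>
definition bip_edges :: "('a \<times> 'a) set \<Rightarrow> ('a + 'a) set set" where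
  "bip_edges A = {{Inl u, Inr v} | u v. (u, v) \<in> A}"

definition matching :: "('b set) set \<Rightarrow> ('b set) set \<Rightarrow> bool" where
  "matching E M \<longleftrightarrow> M \<subseteq> E \<and> (\<forall>e\<in>M. \<forall>e'\<in>M. e \<noteq> e' \<longrightarrow> e \<inter> e' = {})"

end

theory Submission
  imports Defs
begin

text \<open>All five conditions are equivalent to the existence of an injective child map: a choice
  of a child for every non-leaf vertex such that distinct vertices choose distinct children.
  The arcs of a spanning tree whose leaves lie in X give one, since in a tree distinct vertices
  have distinct children; conversely, the chosen arcs, completed by an arbitrary in-arc for
  every vertex nobody chose, form such a spanning tree. Following chosen children from each
  unchosen vertex partitions V into paths ending at leaves, one per leaf, so X itself serves as
  the antichain; conversely, successive vertices on the paths of such a partition define an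
  injective child map. Finally, as leaves have no out-arcs, an injective child map is the same
  as a matching of the bipartite graph that covers the copy of V - X, i.e. one of size
  |V| - |X|.\<close>

definition injective_child_map :: "'a set \<Rightarrow> ('a \<times> 'a) set \<Rightarrow> 'a set \<Rightarrow> ('a \<Rightarrow> 'a) \<Rightarrow> bool"
  where "injective_child_map V A X s \<longleftrightarrow> (\<forall>v\<in>V - X. (v, s v) \<in> A) \<and> inj_on s (V - X)"

definition leaf_path_partition :: "'a set \<Rightarrow> ('a \<times> 'a) set \<Rightarrow> 'a set \<Rightarrow> 'a list set \<Rightarrow> bool"
  where "leaf_path_partition V A X Ps \<longleftrightarrow>
    (\<forall>p\<in>Ps. leaf_path V A X p) \<and> vertex_disjoint Ps \<and> (\<Union>p\<in>Ps. set p) = V"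

lemma finite_in_neighbours: "finite A \<Longrightarrow> finite {u. (u, v) \<in> A}"
  by (rule finite_subset[of _ "fst ` A"]) force+

lemma finite_out_neighbours: "finite A \<Longrightarrow> finite {w. (v, w) \<in> A}"
  by (rule finite_subset[of _ "snd ` A"]) force+

lemma indeg_eq_0_iff: "finite A \<Longrightarrow> indeg A v = 0 \<longleftrightarrow> (\<forall>u. (u, v) \<notin> A)"
  unfolding indeg_def using finite_in_neighbours[of A v] by auto

lemma outdeg_eq_0_iff: "finite A \<Longrightarrow> outdeg A v = 0 \<longleftrightarrow> (\<forall>w. (v, w) \<notin> A)"
  unfolding outdeg_def using finite_out_neighbours[of A v] by auto

lemma indeg_eq_1_iff: "indeg A v = 1 \<longleftrightarrow> (\<exists>!u. (u, v) \<in> A)"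
proof -
  have "indeg A v = 1 \<longleftrightarrow> (\<exists>u. {w. (w, v) \<in> A} = {u})"
    unfolding indeg_def One_nat_def by (rule card_1_singleton_iff)
  then show ?thesis by (simp only: set_eq_iff mem_Collect_eq singleton_iff) metis
qed

lemma distinct_if_acyclic_walk:
  assumes "acyclic A" and walk: "\<And>i. Suc i < length ps \<Longrightarrow> (ps ! i, ps ! Suc i) \<in> A"
  shows "distinct ps"
proof -
  have "(ps ! i, ps ! j) \<in> A\<^sup>+" if "i < j" "j < length ps" for i j
    using that by (induction j) (auto simp: less_Suc_eq intro: walk trancl_into_trancl)
  then show ?thesis
    using \<open>acyclic A\<close> unfolding distinct_conv_nth acyclic_def by (metis nat_neq_iff)
qed

lemma unique_cover_of_subsets_iff_leaf_path_partition:
  "(\<forall>U \<subseteq> V. \<exists>Ps. (\<forall>p\<in>Ps. leaf_path V A X p) \<and> vertex_disjoint Ps \<and>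
      (\<forall>u\<in>U. \<exists>!p. p \<in> Ps \<and> u \<in> set p))
    \<longleftrightarrow> (\<exists>Ps. leaf_path_partition V A X Ps)"
proof
  assume "\<forall>U \<subseteq> V. \<exists>Ps. (\<forall>p\<in>Ps. leaf_path V A X p) \<and> vertex_disjoint Ps \<and>
    (\<forall>u\<in>U. \<exists>!p. p \<in> Ps \<and> u \<in> set p)"
  then obtain Ps where paths: "\<forall>p\<in>Ps. leaf_path V A X p" and "vertex_disjoint Ps"
    and unique: "\<forall>u\<in>V. \<exists>!p. p \<in> Ps \<and> u \<in> set p"
    by (metis order_refl)
  moreover have "(\<Union>p\<in>Ps. set p) = V"
  proof
    show "(\<Union>p\<in>Ps. set p) \<subseteq> V"
      using paths unfolding leaf_path_def dipath_def by blast
    show "V \<subseteq> (\<Union>p\<in>Ps. set p)"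
      using unique by blast
  qed
  ultimately show "\<exists>Ps. leaf_path_partition V A X Ps"
    unfolding leaf_path_partition_def by blast
next
  assume "\<exists>Ps. leaf_path_partition V A X Ps"
  then obtain Ps where paths: "\<forall>p\<in>Ps. leaf_path V A X p" and disjoint: "vertex_disjoint Ps"
    and cover: "(\<Union>p\<in>Ps. set p) = V"
    unfolding leaf_path_partition_def by blast
  have unique: "\<exists>!p. p \<in> Ps \<and> u \<in> set p" if "u \<in> V" for u
    using that cover disjoint unfolding vertex_disjoint_def by (metis UN_E disjoint_iff)
  show "\<forall>U \<subseteq> V. \<exists>Ps. (\<forall>p\<in>Ps. leaf_path V A X p) \<and> vertex_disjoint Ps \<and>
    (\<forall>u\<in>U. \<exists>!p. p \<in> Ps \<and> u \<in> set p)"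
  proof (intro allI impI)
    fix U assume "U \<subseteq> V"
    with unique have "\<forall>u\<in>U. \<exists>!p. p \<in> Ps \<and> u \<in> set p" by blast
    with paths disjoint show "\<exists>Ps. (\<forall>p\<in>Ps. leaf_path V A X p) \<and> vertex_disjoint Ps \<and>
      (\<forall>u\<in>U. \<exists>!p. p \<in> Ps \<and> u \<in> set p)"
      by (intro exI[of _ Ps] conjI)
  qed
qed

lemma ex_injective_child_map_if_left_unique:
  assumes "R \<subseteq> A" and "V - X \<subseteq> Domain R"
    and left_unique: "\<And>u u' w. (u, w) \<in> R \<Longrightarrow> (u', w) \<in> R \<Longrightarrow> u = u'"
  shows "\<exists>s. injective_child_map V A X s"
proof -
  define s where "s v = (SOME w. (v, w) \<in> R)" for v
  have child: "(v, s v) \<in> R" if "v \<in> V - X" for v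
  proof -
    obtain w where "(v, w) \<in> R" using \<open>V - X \<subseteq> Domain R\<close> \<open>v \<in> V - X\<close> by blast
    then show ?thesis unfolding s_def by (rule someI)
  qed
  have "inj_on s (V - X)"
    by (rule inj_onI) (metis child left_unique)
  then have "injective_child_map V A X s"
    unfolding injective_child_map_def using child \<open>R \<subseteq> A\<close> by blast
  then show ?thesis by blast
qed

lemma injective_child_map_if_leaf_path_partition:
  assumes "leaf_path_partition V A X Ps"
  shows "\<exists>s. injective_child_map V A X s"
proof -
  have paths: "\<And>p. p \<in> Ps \<Longrightarrow> leaf_path V A X p" and disjoint: "vertex_disjoint Ps"
    and cover: "(\<Union>p\<in>Ps. set p) = V"
    using assms unfolding leaf_path_partition_def by auto
  define R where "R = {(p ! i, p ! Suc i) | p i. p \<in> Ps \<and> Suc i < length p}"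
  have "R \<subseteq> A"
    using paths unfolding R_def leaf_path_def dipath_def by blast
  moreover have "v \<in> Domain R" if v: "v \<in> V - X" for v
  proof -
    obtain p where "p \<in> Ps" "v \<in> set p" using cover v by blast
    then obtain i where p: "p \<in> Ps" "i < length p" "p ! i = v" by (meson in_set_conv_nth)
    have "last p = p ! (length p - 1)" "last p \<in> X"
      using paths[OF \<open>p \<in> Ps\<close>] unfolding leaf_path_def dipath_def by (auto simp: last_conv_nth)
    then have "Suc i < length p"
      using p v by (metis DiffD2 Suc_lessI diff_Suc_1)
    with p show ?thesis unfolding R_def by blast
  qed
  moreover have "u = u'" if arcs: "(u, w) \<in> R" "(u', w) \<in> R" for u u' w
  proof -
    obtain p i q j where pq: "p \<in> Ps" "Suc i < length p" "u = p ! i" "w = p ! Suc i"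
      "q \<in> Ps" "Suc j < length q" "u' = q ! j" "w = q ! Suc j"
      using arcs unfolding R_def by blast
    then have "w \<in> set p \<inter> set q" by (metis IntI nth_mem)
    then have "p = q"
      using disjoint pq unfolding vertex_disjoint_def by blast
    moreover have "distinct p"
      using paths[OF \<open>p \<in> Ps\<close>] unfolding leaf_path_def dipath_def by simp
    ultimately show ?thesis
      using pq nth_eq_iff_index_eq[of p "Suc i" "Suc j"] by auto
  qed
  ultimately show ?thesis
    by (intro ex_injective_child_map_if_left_unique) blast+
qed

lemma doubleton_Inl_Inr_eq_iff: "{Inl u, Inr w} = {Inl u', Inr w'} \<longleftrightarrow> u = u' \<and> w = w'"
  by (auto simp: doubleton_eq_iff)

locale sink_digraph =
  fixes V :: "'a set" and A :: "('a \<times> 'a) set" and X :: "'a set"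
  assumes finite_vertices: "finite V"
    and arcs_in_vertices: "A \<subseteq> V \<times> V"
    and sinks_eq: "X = {v \<in> V. \<forall>w. (v, w) \<notin> A}"
begin

lemma finite_arcs: "finite A"
  using finite_vertices arcs_in_vertices by (meson finite_SigmaI finite_subset)

lemma sinks_subset: "X \<subseteq> V"
  using sinks_eq by blast

lemma arc_tail_nonsink: "(u, w) \<in> A \<Longrightarrow> u \<in> V - X"
  using arcs_in_vertices sinks_eq by blast

lemma card_nonsinks: "card (V - X) = card V - card X"
  using card_Diff_subset finite_subset finite_vertices sinks_subset by blast

lemma antichain_sinks: "antichain A X"
  unfolding antichain_def by (metis DiffD2 arc_tail_nonsink converse_tranclE)

lemma card_leaf_path_partition:
  assumes "leaf_path_partition V A X Ps"
  shows "card Ps = card X"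
proof -
  have paths: "\<And>p. p \<in> Ps \<Longrightarrow> leaf_path V A X p" and disjoint: "vertex_disjoint Ps"
    and cover: "(\<Union>p\<in>Ps. set p) = V"
    using assms unfolding leaf_path_partition_def by auto
  have nonempty: "p \<noteq> []" if "p \<in> Ps" for p
    using paths[OF that] unfolding leaf_path_def dipath_def by simp
  have "inj_on last Ps"
  proof (rule inj_onI)
    fix p q assume "p \<in> Ps" "q \<in> Ps" "last p = last q"
    then have "last p \<in> set p \<inter> set q" using nonempty by (metis IntI last_in_set)
    with \<open>p \<in> Ps\<close> \<open>q \<in> Ps\<close> show "p = q" using disjoint unfolding vertex_disjoint_def by blast
  qed
  moreover have "X \<subseteq> last ` Ps"
  proof
    fix x assume "x \<in> X"
    then obtain p where "p \<in> Ps" "x \<in> set p" using cover sinks_subset by blast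
    then obtain i where p: "p \<in> Ps" "i < length p" "p ! i = x" by (meson in_set_conv_nth)
    have "\<not> Suc i < length p"
      using paths[OF \<open>p \<in> Ps\<close>] p \<open>x \<in> X\<close> arc_tail_nonsink
      unfolding leaf_path_def dipath_def by blast
    then have "x = last p" using p by (metis last_conv_nth Suc_lessI diff_Suc_1 less_zeroE list.size(3))
    with p show "x \<in> last ` Ps" by blast
  qed
  moreover have "last ` Ps \<subseteq> X"
    using paths unfolding leaf_path_def by blast
  ultimately show ?thesis
    by (metis card_image subset_antisym)
qed

lemma antichain_partition_iff_leaf_path_partition:
  "(\<exists>S Ps. S \<subseteq> V \<and> antichain A S \<and> (\<forall>p\<in>Ps. leaf_path V A X p) \<and>
      vertex_disjoint Ps \<and> (\<Union>p\<in>Ps. set p) = V \<and> card Ps = card S)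
    \<longleftrightarrow> (\<exists>Ps. leaf_path_partition V A X Ps)"
proof
  assume "\<exists>Ps. leaf_path_partition V A X Ps"
  then obtain Ps where "leaf_path_partition V A X Ps" ..
  then show "\<exists>S Ps. S \<subseteq> V \<and> antichain A S \<and> (\<forall>p\<in>Ps. leaf_path V A X p) \<and>
    vertex_disjoint Ps \<and> (\<Union>p\<in>Ps. set p) = V \<and> card Ps = card S"
    using card_leaf_path_partition antichain_sinks sinks_subset
    unfolding leaf_path_partition_def by blast
qed (auto simp: leaf_path_partition_def)

lemma matching_if_injective_child_map:
  assumes "injective_child_map V A X s"
  shows "\<exists>M. matching (bip_edges A) M \<and> card M = card V - card X"
proof -
  have arcs: "\<And>v. v \<in> V - X \<Longrightarrow> (v, s v) \<in> A" and inj: "inj_on s (V - X)"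
    using assms unfolding injective_child_map_def by auto
  define edge where "edge v = {Inl v, Inr (s v)}" for v
  have "matching (bip_edges A) (edge ` (V - X))"
    unfolding matching_def
  proof (intro conjI ballI impI)
    show "edge ` (V - X) \<subseteq> bip_edges A"
      using arcs unfolding edge_def bip_edges_def by blast
    fix e e' assume "e \<in> edge ` (V - X)" "e' \<in> edge ` (V - X)" "e \<noteq> e'"
    then obtain v v' where "v \<in> V - X" "v' \<in> V - X" "e = edge v" "e' = edge v'" "v \<noteq> v'"
      by blast
    moreover from this have "s v \<noteq> s v'"
      using inj_onD[OF inj] by blast
    ultimately show "e \<inter> e' = {}"
      unfolding edge_def by auto
  qed
  moreover have "inj_on edge (V - X)"
    unfolding edge_def by (rule inj_onI) (simp add: doubleton_Inl_Inr_eq_iff)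
  then have "card (edge ` (V - X)) = card V - card X"
    using card_image card_nonsinks by metis
  ultimately show ?thesis by blast
qed

lemma injective_child_map_if_matching:
  assumes "matching (bip_edges A) M" and card_M: "card M = card V - card X"
  shows "\<exists>s. injective_child_map V A X s"
proof -
  have "M \<subseteq> bip_edges A" and disjoint: "\<And>e e'. e \<in> M \<Longrightarrow> e' \<in> M \<Longrightarrow> e \<noteq> e' \<Longrightarrow> e \<inter> e' = {}"
    using assms unfolding matching_def by auto
  define R where "R = {(u, w). {Inl u, Inr w} \<in> M}"
  define edge :: "'a \<times> 'a \<Rightarrow> ('a + 'a) set" where "edge = (\<lambda>(u, w). {Inl u, Inr w})"
  have "R \<subseteq> A"
    using \<open>M \<subseteq> bip_edges A\<close> unfolding R_def bip_edges_def by (auto simp: doubleton_Inl_Inr_eq_iff)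
  have "M = edge ` R"
    using \<open>M \<subseteq> bip_edges A\<close> unfolding R_def edge_def bip_edges_def by auto
  moreover have "inj_on edge R"
    unfolding edge_def by (auto intro!: inj_onI simp: doubleton_Inl_Inr_eq_iff)
  moreover have "inj_on fst R"
    unfolding inj_on_def R_def using disjoint by (fastforce simp: doubleton_Inl_Inr_eq_iff)
  ultimately have "card (fst ` R) = card (V - X)"
    using card_M card_nonsinks by (simp add: card_image)
  moreover have "fst ` R \<subseteq> V - X"
    using \<open>R \<subseteq> A\<close> arc_tail_nonsink by auto
  ultimately have "Domain R = V - X"
    using finite_vertices by (metis card_subset_eq finite_Diff fst_eq_Domain)
  moreover have "u = u'" if "(u, w) \<in> R" "(u', w) \<in> R" for u u' w
    using that disjoint unfolding R_def by (fastforce simp: doubleton_Inl_Inr_eq_iff)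
  ultimately show ?thesis
    using \<open>R \<subseteq> A\<close> by (intro ex_injective_child_map_if_left_unique) auto
qed

lemma matching_iff_injective_child_map:
  "(\<exists>M. matching (bip_edges A) M \<and> card M = card V - card X) \<longleftrightarrow> (\<exists>s. injective_child_map V A X s)"
  using matching_if_injective_child_map injective_child_map_if_matching by blast

end

locale sink_dag = sink_digraph +
  assumes acyclic_arcs: "acyclic A"
begin

lemma wf_arcs: "wf A"
  using finite_arcs acyclic_arcs by (rule finite_acyclic_wf)

lemma wf_converse_arcs: "wf (A\<inverse>)"
  using finite_arcs acyclic_arcs by (rule finite_acyclic_wf_converse)

end

locale child_map = sink_dag +
  fixes s :: "'a \<Rightarrow> 'a"
  assumes injective_child_map: "injective_child_map V A X s"
begin

lemma child_arc: "v \<in> V - X \<Longrightarrow> (v, s v) \<in> A"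
  using injective_child_map unfolding injective_child_map_def by blast

lemma inj_child: "inj_on s (V - X)"
  using injective_child_map unfolding injective_child_map_def by blast

lemma child_in_vertices: "v \<in> V - X \<Longrightarrow> s v \<in> V"
  using child_arc arcs_in_vertices by auto

lemma iterate_reaches_sink: "v \<in> V \<Longrightarrow> \<exists>m. (s ^^ m) v \<in> X"
  using wf_converse_arcs
proof (induction v rule: wf_induct_rule)
  case (less v)
  show ?case
  proof (cases "v \<in> X")
    case True
    then show ?thesis by (intro exI[of _ 0]) simp
  next
    case False
    with less.prems have "(s v, v) \<in> A\<inverse>" "s v \<in> V"
      using child_arc child_in_vertices by auto
    then obtain m where "(s ^^ m) (s v) \<in> X" using less.IH by blast
    then have "(s ^^ Suc m) v \<in> X" by (simp add: funpow_Suc_right del: funpow.simps)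
    then show ?thesis ..
  qed
qed

definition sink_distance :: "'a \<Rightarrow> nat"
  where "sink_distance v = (LEAST m. (s ^^ m) v \<in> X)"

lemma iterate_sink_distance: "v \<in> V \<Longrightarrow> (s ^^ sink_distance v) v \<in> X"
  unfolding sink_distance_def using iterate_reaches_sink by (rule LeastI_ex)

lemma iterate_before_sink_distance:
  "v \<in> V \<Longrightarrow> i < sink_distance v \<Longrightarrow> (s ^^ i) v \<in> V - X"
proof (induction i)
  case 0
  then show ?case using not_less_Least unfolding sink_distance_def by fastforce
next
  case (Suc i)
  then have "(s ^^ i) v \<in> V - X" by simp
  then have "(s ^^ Suc i) v \<in> V" using child_in_vertices by simp
  moreover have "(s ^^ Suc i) v \<notin> X"
    using Suc.prems(2) not_less_Least unfolding sink_distance_def by blast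
  ultimately show ?case by blast
qed

definition chosen_path :: "'a \<Rightarrow> 'a list"
  where "chosen_path v = map (\<lambda>i. (s ^^ i) v) [0..<Suc (sink_distance v)]"

lemma set_chosen_path: "set (chosen_path v) = {(s ^^ i) v | i. i \<le> sink_distance v}"
  unfolding chosen_path_def by (auto simp del: upt_Suc simp: less_Suc_eq_le)

lemma leaf_path_chosen_path:
  assumes "v \<in> V"
  shows "leaf_path V A X (chosen_path v)"
proof -
  have walk: "(chosen_path v ! i, chosen_path v ! Suc i) \<in> A" if "Suc i < length (chosen_path v)" for i
    using that child_arc iterate_before_sink_distance[OF assms]
    unfolding chosen_path_def by (simp del: upt_Suc)
  have "set (chosen_path v) \<subseteq> V"
    using iterate_before_sink_distance[OF assms] iterate_sink_distance[OF assms] sinks_subset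
    unfolding set_chosen_path by (force simp: le_less)
  moreover have "last (chosen_path v) \<in> X"
    using iterate_sink_distance[OF assms] unfolding chosen_path_def by (simp add: last_map)
  moreover have "chosen_path v \<noteq> []"
    unfolding chosen_path_def by simp
  ultimately show ?thesis
    unfolding leaf_path_def dipath_def using walk distinct_if_acyclic_walk[OF acyclic_arcs walk] by blast
qed

definition path_starts :: "'a set"
  where "path_starts = V - s ` (V - X)"

lemma path_starts_subset: "path_starts \<subseteq> V"
  unfolding path_starts_def by blast

lemma path_start_not_iterate:
  assumes "v \<in> path_starts" "v' \<in> V" "k < sink_distance v'"
  shows "v \<noteq> (s ^^ Suc k) v'"
  using assms iterate_before_sink_distance unfolding path_starts_def by auto

lemma chosen_paths_meet_only_if_equal:
  assumes starts: "v \<in> path_starts" "v' \<in> path_starts"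
    and "i \<le> sink_distance v" "j \<le> sink_distance v'" "(s ^^ i) v = (s ^^ j) v'"
  shows "v = v'"
  using assms(3-5)
proof (induction i arbitrary: j)
  case 0
  show ?case
  proof (cases j)
    case (Suc k)
    with "0.prems" have "v = (s ^^ Suc k) v'" "k < sink_distance v'" by auto
    then show ?thesis using path_start_not_iterate starts path_starts_subset by blast
  qed (use "0.prems" in simp)
next
  case (Suc i)
  show ?case
  proof (cases j)
    case 0
    with Suc.prems have "v' = (s ^^ Suc i) v" "i < sink_distance v" by auto
    then show ?thesis using path_start_not_iterate starts path_starts_subset by blast
  next
    case (Suc k)
    have "(s ^^ i) v \<in> V - X" "(s ^^ k) v' \<in> V - X"
      using Suc \<open>Suc i \<le> _\<close> \<open>j \<le> _\<close> starts path_starts_subset iterate_before_sink_distance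
      by (auto simp del: funpow.simps)
    moreover have "s ((s ^^ i) v) = s ((s ^^ k) v')"
      using Suc \<open>(s ^^ Suc i) v = _\<close> by simp
    ultimately have "(s ^^ i) v = (s ^^ k) v'"
      using inj_child by (meson inj_onD)
    then show ?thesis
      using Suc.IH[of k] Suc.prems Suc by simp
  qed
qed

lemma on_chosen_path_of_start:
  "w \<in> V \<Longrightarrow> \<exists>v\<in>path_starts. \<exists>i\<le>sink_distance v. (s ^^ i) v = w"
  using wf_arcs
proof (induction w rule: wf_induct_rule)
  case (less w)
  show ?case
  proof (cases "w \<in> path_starts")
    case True
    then show ?thesis by (intro bexI[of _ w] exI[of _ 0]) simp_all
  next
    case False
    with less.prems obtain u where u: "u \<in> V - X" "w = s u"
      unfolding path_starts_def by blast
    with less.IH obtain v i where v: "v \<in> path_starts" "i \<le> sink_distance v" "(s ^^ i) v = u"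
      using child_arc arcs_in_vertices by blast
    have "i \<noteq> sink_distance v"
      using u v iterate_sink_distance path_starts_subset by auto
    with v have "Suc i \<le> sink_distance v" by simp
    moreover have "(s ^^ Suc i) v = w" using u v by simp
    ultimately show ?thesis using v(1) by blast
  qed
qed

lemma chosen_paths_disjoint:
  assumes "v \<in> path_starts" "v' \<in> path_starts" "v \<noteq> v'"
  shows "set (chosen_path v) \<inter> set (chosen_path v') = {}"
  using chosen_paths_meet_only_if_equal[OF assms(1,2)] assms(3) by (auto simp: set_chosen_path)

lemma leaf_path_partition_chosen_paths: "leaf_path_partition V A X (chosen_path ` path_starts)"
  unfolding leaf_path_partition_def
proof (intro conjI)
  show "\<forall>p\<in>chosen_path ` path_starts. leaf_path V A X p"
    using leaf_path_chosen_path path_starts_subset by blast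
  show "vertex_disjoint (chosen_path ` path_starts)"
    unfolding vertex_disjoint_def using chosen_paths_disjoint by blast
  show "(\<Union>p\<in>chosen_path ` path_starts. set p) = V"
  proof
    show "(\<Union>p\<in>chosen_path ` path_starts. set p) \<subseteq> V"
      using leaf_path_chosen_path path_starts_subset unfolding leaf_path_def dipath_def by blast
    show "V \<subseteq> (\<Union>p\<in>chosen_path ` path_starts. set p)"
    proof
      fix w assume "w \<in> V"
      then obtain v i where "v \<in> path_starts" "i \<le> sink_distance v" "(s ^^ i) v = w"
        using on_chosen_path_of_start by blast
      then have "w \<in> set (chosen_path v)"
        unfolding set_chosen_path by blast
      with \<open>v \<in> path_starts\<close> show "w \<in> (\<Union>p\<in>chosen_path ` path_starts. set p)"
        by blast
    qed
  qed
qed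

end

context sink_dag
begin

lemma leaf_path_partition_iff_injective_child_map:
  "(\<exists>Ps. leaf_path_partition V A X Ps) \<longleftrightarrow> (\<exists>s. injective_child_map V A X s)"
proof
  assume "\<exists>Ps. leaf_path_partition V A X Ps"
  then show "\<exists>s. injective_child_map V A X s"
    using injective_child_map_if_leaf_path_partition by blast
next
  assume "\<exists>s. injective_child_map V A X s"
  then obtain s where "injective_child_map V A X s" ..
  then interpret child_map V A X s
    by unfold_locales
  show "\<exists>Ps. leaf_path_partition V A X Ps"
    using leaf_path_partition_chosen_paths ..
qed

end

locale rooted_sink_dag = sink_dag +
  fixes r :: 'a
  assumes root_in_vertices: "r \<in> V"
    and no_arc_into_root: "(u, r) \<notin> A"
    and arc_into_nonroot: "v \<in> V - {r} \<Longrightarrow> \<exists>u. (u, v) \<in> A"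
begin

lemma net_root_eq: "net_root V A = r"
  unfolding net_root_def
proof (rule the_equality)
  show "r \<in> V \<and> indeg A r = 0"
    using root_in_vertices no_arc_into_root indeg_eq_0_iff[OF finite_arcs] by simp
  fix r' assume "r' \<in> V \<and> indeg A r' = 0"
  then show "r' = r"
    using arc_into_nonroot indeg_eq_0_iff[OF finite_arcs] by blast
qed

lemma injective_child_map_if_tree_based:
  assumes "tree_based V A X"
  shows "\<exists>s. injective_child_map V A X s"
proof -
  obtain T where "T \<subseteq> A" and one_parent: "\<forall>v\<in>V - {r}. indeg T v = 1"
    and leaves: "\<forall>v\<in>V. outdeg T v = 0 \<longrightarrow> v \<in> X"
    using assms unfolding tree_based_def net_root_eq by blast
  have "finite T"
    using finite_arcs \<open>T \<subseteq> A\<close> by (rule finite_subset[rotated])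
  have "V - X \<subseteq> Domain T"
  proof
    fix v assume "v \<in> V - X"
    then have "outdeg T v \<noteq> 0" using leaves by blast
    then obtain w where "(v, w) \<in> T" using outdeg_eq_0_iff[OF \<open>finite T\<close>, of v] by auto
    then show "v \<in> Domain T" ..
  qed
  moreover have "u = u'" if arcs: "(u, w) \<in> T" "(u', w) \<in> T" for u u' w
  proof -
    have "(u, w) \<in> A"
      using arcs(1) \<open>T \<subseteq> A\<close> by blast
    then have "w \<in> V - {r}"
      using arcs_in_vertices no_arc_into_root by auto
    then have "indeg T w = 1"
      using one_parent by blast
    then have "\<exists>!u. (u, w) \<in> T"
      by (simp only: indeg_eq_1_iff)
    with arcs show ?thesis by auto
  qed
  ultimately show ?thesis
    using \<open>T \<subseteq> A\<close> ex_injective_child_map_if_left_unique by metis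
qed

lemma tree_based_if_parent_map:
  assumes parent: "\<And>v. v \<in> V - {r} \<Longrightarrow> (p v, v) \<in> A"
    and nonsinks_are_parents: "V - X \<subseteq> p ` (V - {r})"
  shows "tree_based V A X"
proof -
  define T where "T = {(p v, v) | v. v \<in> V - {r}}"
  have "T \<subseteq> A"
    using parent unfolding T_def by blast
  have in_T: "{u. (u, v) \<in> T} = (if v \<in> V - {r} then {p v} else {})" for v
    unfolding T_def by auto
  have "indeg T r = 0" "\<forall>v\<in>V - {r}. indeg T v = 1"
    unfolding indeg_def in_T by auto
  moreover have "(r, v) \<in> T\<^sup>*" if "v \<in> V" for v
    using wf_arcs that
  proof (induction v rule: wf_induct_rule)
    case (less v)
    show ?case
    proof (cases "v = r")
      case False
      with less.prems have "(p v, v) \<in> A" "(p v, v) \<in> T"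
        using parent unfolding T_def by auto
      moreover from this have "(r, p v) \<in> T\<^sup>*"
        using less.IH arcs_in_vertices by blast
      ultimately show ?thesis by (meson rtrancl_into_rtrancl)
    qed simp
  qed
  moreover have "v \<in> X" if "v \<in> V" "outdeg T v = 0" for v
  proof (rule ccontr)
    assume "v \<notin> X"
    with \<open>v \<in> V\<close> have "v \<in> p ` (V - {r})"
      using nonsinks_are_parents by blast
    then obtain w where "w \<in> V - {r}" "v = p w" by blast
    then have "(v, w) \<in> T" unfolding T_def by blast
    moreover have "finite T"
      using finite_arcs \<open>T \<subseteq> A\<close> by (rule finite_subset[rotated])
    ultimately have "outdeg T v \<noteq> 0"
      by (auto simp add: outdeg_eq_0_iff)
    then show False using \<open>outdeg T v = 0\<close> by simp
  qed
  ultimately show ?thesis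
    unfolding tree_based_def net_root_eq using \<open>T \<subseteq> A\<close> by blast
qed

lemma tree_based_if_injective_child_map:
  assumes "injective_child_map V A X s"
  shows "tree_based V A X"
proof -
  have child: "\<And>v. v \<in> V - X \<Longrightarrow> (v, s v) \<in> A" and inj: "inj_on s (V - X)"
    using assms unfolding injective_child_map_def by auto
  define p where "p v = (if v \<in> s ` (V - X) then the_inv_into (V - X) s v else (SOME u. (u, v) \<in> A))"
    for v
  have p_child: "p (s v) = v" if "v \<in> V - X" for v
    unfolding p_def using inj that by (simp add: the_inv_into_f_f)
  have "(p v, v) \<in> A" if "v \<in> V - {r}" for v
  proof (cases "v \<in> s ` (V - X)")
    case True
    then show ?thesis using child p_child by auto
  next
    case False
    then show ?thesis
      unfolding p_def using someI_ex[OF arc_into_nonroot[OF that]] by simp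
  qed
  moreover have "V - X \<subseteq> p ` (V - {r})"
  proof
    fix v assume "v \<in> V - X"
    then have "(v, s v) \<in> A" by (rule child)
    then have "s v \<in> V - {r}"
      using arcs_in_vertices no_arc_into_root by auto
    with p_child[OF \<open>v \<in> V - X\<close>] show "v \<in> p ` (V - {r})" by force
  qed
  ultimately show ?thesis
    by (rule tree_based_if_parent_map)
qed

lemma tree_based_iff_injective_child_map:
  "tree_based V A X \<longleftrightarrow> (\<exists>s. injective_child_map V A X s)"
  using injective_child_map_if_tree_based tree_based_if_injective_child_map by blast

end

lemma rooted_sink_dag_if_phylo_network:
  assumes "phylo_network V A X"
  shows "\<exists>r. rooted_sink_dag V A X r"
proof -
  have "finite V" "A \<subseteq> V \<times> V" "acyclic A"
    using assms unfolding phylo_network_def by auto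
  then have "finite A"
    by (meson finite_SigmaI finite_subset)
  from assms consider (single_leaf) "V = X" "card X = 1" "A = {}"
    | (rooted) r where "r \<in> V" "indeg A r = 0" "\<forall>v\<in>V - {r}. indeg A v \<ge> 1"
        "X = {v \<in> V. outdeg A v = 0}"
    unfolding phylo_network_def by blast
  then show ?thesis
  proof cases
    case single_leaf
    then obtain x where "V = {x}" by (metis card_1_singletonE)
    with single_leaf have "rooted_sink_dag V A X x"
      by unfold_locales (auto simp: acyclic_def)
    then show ?thesis ..
  next
    case rooted
    have "X = {v \<in> V. \<forall>w. (v, w) \<notin> A}"
      using rooted(4) outdeg_eq_0_iff[OF \<open>finite A\<close>] by simp
    moreover have "\<exists>u. (u, v) \<in> A" if "v \<in> V - {r}" for v
    proof -
      have "indeg A v \<noteq> 0" using rooted(3) that by (metis not_one_le_zero)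
      then show ?thesis using indeg_eq_0_iff[OF \<open>finite A\<close>, of v] by simp
    qed
    ultimately have "rooted_sink_dag V A X r"
      using \<open>finite V\<close> \<open>A \<subseteq> V \<times> V\<close> \<open>acyclic A\<close> rooted(1,2) indeg_eq_0_iff[OF \<open>finite A\<close>]
      by unfold_locales auto
    then show ?thesis ..
  qed
qed

theorem theorem3:
  fixes V :: "'a set" and A :: "('a \<times> 'a) set" and X :: "'a set"
  assumes "phylo_network V A X"
  shows "(tree_based V A X \<longleftrightarrow>
            (\<exists>S Ps. S \<subseteq> V \<and> antichain A S \<and> (\<forall>p\<in>Ps. leaf_path V A X p) \<and>
               vertex_disjoint Ps \<and> (\<Union>p\<in>Ps. set p) = V \<and> card Ps = card S))
       \<and> (tree_based V A X \<longleftrightarrow>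
            (\<forall>U \<subseteq> V. \<exists>Ps. (\<forall>p\<in>Ps. leaf_path V A X p) \<and> vertex_disjoint Ps \<and>
               (\<forall>u\<in>U. \<exists>!p. p \<in> Ps \<and> u \<in> set p)))
       \<and> (tree_based V A X \<longleftrightarrow>
            (\<exists>Ps. (\<forall>p\<in>Ps. leaf_path V A X p) \<and> vertex_disjoint Ps \<and> (\<Union>p\<in>Ps. set p) = V))
       \<and> (tree_based V A X \<longleftrightarrow>
            (\<exists>M. matching (bip_edges A) M \<and> card M = card V - card X))"
proof -
  obtain r where "rooted_sink_dag V A X r"
    using rooted_sink_dag_if_phylo_network[OF assms] ..
  then interpret rooted_sink_dag V A X r .
  have partition: "tree_based V A X \<longleftrightarrow> (\<exists>Ps. leaf_path_partition V A X Ps)"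
    using tree_based_iff_injective_child_map leaf_path_partition_iff_injective_child_map by simp
  have matching: "(\<exists>M. matching (bip_edges A) M \<and> card M = card V - card X)
      \<longleftrightarrow> (\<exists>Ps. leaf_path_partition V A X Ps)"
    using matching_iff_injective_child_map leaf_path_partition_iff_injective_child_map by simp
  show ?thesis
    unfolding antichain_partition_iff_leaf_path_partition unique_cover_of_subsets_iff_leaf_path_partition
      matching leaf_path_partition_def[symmetric] partition by simp
qed

end
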